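(* There exists $N_0$ such that for all $N\ge N_0$ and all $z,\bar z\in U(N)$ there exists $T_0\in\mathbb R$ with $|T_0|<N\log^6N$ and $d_H(K_{T_0}(\bar z),z)\le1/N$.
   Context: Kochergin flow setting: $\gamma=\frac12-\eta$ with $0<\eta<\frac12$. $f\in C^2((0,1))$, $f>0$, $f''>0$, $\int_0^1f=1$, $\lim_{x\to0^+}f(x)x^{\gamma}=M_1$, $\lim_{x\to1^-}f(x)(1-x)^{\gamma}=M_2$, $\lim_{x\to0^+}f'(x)x^{\gamma+1}=-M_3$, $\lim_{x\to1^-}f'(x)(1-x)^{\gamma+1}=M_4$ with $M_i\in(0,1)$. $\alpha\in(0,1)$ is irrational and the denominators $q_n$ of its continued fraction convergents satisfy $q_{n+1}\le q_n\log^2q_n$ for all sufficiently large $n$. Identify $[0,1)\cong\mathbb R/\mathbb Z$; $\|\cdot\|$ is the distance to the nearest integer. $M=\{(a,b):a\in[0,1),0\le b<f(a)\}$. $K_t$ is the special flow over $a\mapsto a+\alpha$ under $f$: $K_t(a,b)=(a+n\alpha,b+t-S_nf(a))$, $n=N((a,b),t)$ the unique integer with $S_nf(a)\le b+t<S_{n+1}f(a)$, where $S_nf(a)=\sum_{i=0}^{n-1}f(a+i\alpha)$ ($n>0$), $S_0f=0$, $S_nf(a)=-\sum_{i=1}^{-n}f(a-i\alpha)$ ($n<0$). For $z=(a,b),\bar z=(\bar a,\bar b)\in M$: $d_H(z,\bar z)=\|a-\bar a\|$. Logarithms are natural. $U(N)=\{z=(z_1,z_2)\in M:\ \|n\alpha+z_1\|\ge1/(N\log^3N)\text{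 for all integers }|n|\le N\log^2N\}$. *)

theory Defs
  imports "HOL-Analysis.Analysis"
begin

fun cf_rem :: "real \<Rightarrow> nat \<Rightarrow> real" where
  "cf_rem x 0 = x"
| "cf_rem x (Suc n) = 1 / frac (cf_rem x n)"

definition cf_a :: "real \<Rightarrow> nat \<Rightarrow> nat" where
  "cf_a x n = nat \<lfloor>cf_rem x n\<rfloor>"

fun cf_q :: "real \<Rightarrow> nat \<Rightarrow> nat" where
  "cf_q x 0 = 1"
| "cf_q x (Suc 0) = cf_a x 1"
| "cf_q x (Suc (Suc n)) = cf_a x (Suc (Suc n)) * cf_q x (Suc n) + cf_q x n"

definition dnint :: "real \<Rightarrow> real" where
  "dnint x = \<bar>x - of_int (round x)\<bar>"

text \<open>Birkhoff sums S_n f(a) over the rotation a \<mapsto> a + alpha on [0,1) = R/Z.\<close>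
definition birk :: "(real \<Rightarrow> real) \<Rightarrow> real \<Rightarrow> int \<Rightarrow> real \<Rightarrow> real" where
  "birk f \<alpha> n a =
     (if n \<ge> 0 then (\<Sum>i<nat n. f (frac (a + real i * \<alpha>)))
      else - (\<Sum>i\<in>{1..nat (- n)}. f (frac (a - real i * \<alpha>))))"

definition flow_space :: "(real \<Rightarrow> real) \<Rightarrow> (real \<times> real) set" where
  "flow_space f = {(a, b). 0 \<le> a \<and> a < 1 \<and> 0 \<le> b \<and> b < f a}"

definition flow_N :: "(real \<Rightarrow> real) \<Rightarrow> real \<Rightarrow> real \<times> real \<Rightarrow> real \<Rightarrow> int" where
  "flow_N f \<alpha> z t = (THE n. birk f \<alpha> n (fst z) \<le> snd z + t \<and> snd z + t < birk f \<alpha> (n + 1) (fst z))"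

definition spflow :: "(real \<Rightarrow> real) \<Rightarrow> real \<Rightarrow> real \<Rightarrow> real \<times> real \<Rightarrow> real \<times> real" where
  "spflow f \<alpha> t z = (let n = flow_N f \<alpha> z t in
      (frac (fst z + of_int n * \<alpha>), snd z + t - birk f \<alpha> n (fst z)))"

definition dH :: "real \<times> real \<Rightarrow> real \<times> real \<Rightarrow> real" where
  "dH z w = dnint (fst z - fst w)"

definition U_set :: "(real \<Rightarrow> real) \<Rightarrow> real \<Rightarrow> nat \<Rightarrow> (real \<times> real) set" where
  "U_set f \<alpha> N = {z \<in> flow_space f. \<forall>n::int. real_of_int \<bar>n\<bar> \<le> real N * (ln (real N))^2 \<longrightarrow>
       dnint (of_int n * \<alpha> + fst z) \<ge> 1 / (real N * (ln (real N))^3)}"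

end

theory Submission
  imports Defs "HOL-Real_Asymp.Real_Asymp"
begin

(* Let q = q_k be the first convergent denominator with q >= N; the growth condition on the q_k
   gives q <= N log^2 N. Since |q alpha - p| < 1/q with p, q coprime, the points a + i alpha,
   i < q, lie within 2/q of the grid points j/q (mod 1), every j < q occurring exactly once.
   Hence some i < q moves the base point within 1/q <= 1/N of any target, and the flow gets there
   after a time bounded by the Birkhoff sum S_q f(a). The limits at 0 and 1 give
   f(x) <= C / sqrt ||x||, and a point of U(N) keeps its first q iterates at distance
   >= 1/(N log^3 N) from 0, so summing over one orbit point per grid slot yields
   S_q f(a) <= C (6 sqrt (N log^3 N) + 4 q) = O(N log^2 N), eventually below N log^6 N. *)

section \<open>Distance to the nearest integer\<close>

lemma dnint_le_dist_int: "dnint x \<le> \<bar>x - of_int m\<bar>"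
  unfolding dnint_def by (rule round_diff_minimal)

lemma dnint_le_abs: "dnint x \<le> \<bar>x\<bar>"
  using dnint_le_dist_int[of x 0] by simp

lemma dnint_triangle: "dnint x \<le> dnint y + \<bar>x - y\<bar>"
proof -
  have "dnint x \<le> \<bar>x - of_int (round y)\<bar>" by (rule dnint_le_dist_int)
  also have "\<dots> \<le> dnint y + \<bar>x - y\<bar>" unfolding dnint_def by linarith
  finally show ?thesis .
qed

lemma dnint_add_int [simp]: "dnint (x + of_int m) = dnint x"
proof (rule antisym)
  show "dnint (x + of_int m) \<le> dnint x"
    using dnint_le_dist_int[of "x + of_int m" "round x + m"] by (simp add: dnint_def)
  show "dnint x \<le> dnint (x + of_int m)"
    using dnint_le_dist_int[of x "round (x + of_int m) - m"] by (simp add: dnint_def algebra_simps)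
qed

lemma dnint_frac_diff: "dnint (frac x - t) = dnint (x - t)"
  using dnint_add_int[of "x - t" "- \<lfloor>x\<rfloor>"] by (simp add: frac_def algebra_simps)

lemma dnint_unit_interval:
  assumes "0 \<le> x" "x \<le> 1"
  shows "dnint x = min x (1 - x)"
proof (rule antisym)
  show "dnint x \<le> min x (1 - x)"
    using dnint_le_dist_int[of x 0] dnint_le_dist_int[of x 1] assms by simp
  have "(of_int (round x) :: real) \<le> 0 \<or> (of_int (round x) :: real) \<ge> 1"
    by (cases "round x \<le> 0") auto
  then show "min x (1 - x) \<le> dnint x"
    unfolding dnint_def using assms by linarith
qed

section \<open>Continued fractions\<close>

declare cf_rem.simps(2) [simp del]

(* Numerators of the convergents of a number in (0,1): p_0 = 0 because its partial quotient a_0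
   vanishes. *)
fun cf_p :: "real \<Rightarrow> nat \<Rightarrow> nat" where
  "cf_p x 0 = 0"
| "cf_p x (Suc 0) = 1"
| "cf_p x (Suc (Suc n)) = cf_a x (Suc (Suc n)) * cf_p x (Suc n) + cf_p x n"

locale cf_irrational =
  fixes \<alpha> :: real
  assumes pos: "0 < \<alpha>" and less_one: "\<alpha> < 1" and irrational: "\<alpha> \<notin> \<rat>"
begin

abbreviation "r \<equiv> cf_rem \<alpha>"
abbreviation "p \<equiv> cf_p \<alpha>"
abbreviation "q \<equiv> cf_q \<alpha>"

definition err :: "nat \<Rightarrow> real" where
  "err k = real (q k) * \<alpha> - real (p k)"

lemma cf_rem_irrational: "r k \<notin> \<rat>"
proof (induction k)
  case 0
  then show ?case using irrational by simp
next
  case (Suc k)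
  have "frac (r k) \<notin> \<rat>"
  proof
    assume "frac (r k) \<in> \<rat>"
    then have "frac (r k) + of_int \<lfloor>r k\<rfloor> \<in> \<rat>" by simp
    then show False using Suc by (simp add: frac_def)
  qed
  then show ?case
    by (metis Rats_inverse cf_rem.simps(2) inverse_eq_divide inverse_inverse_eq)
qed

lemma frac_cf_rem_pos: "0 < frac (r k)"
proof -
  have "frac (r k) \<noteq> 0"
    using cf_rem_irrational[of k] by (metis Ints_cases Rats_of_int frac_eq_0_iff)
  then show ?thesis using frac_ge_0[of "r k"] by linarith
qed

lemma cf_rem_Suc_gt_one: "1 < r (Suc k)"
  using frac_cf_rem_pos[of k] frac_lt_1[of "r k"] by (simp add: field_simps cf_rem.simps(2))

lemma cf_rem_pos: "0 < r k"
proof (cases k)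
  case (Suc j)
  then show ?thesis using cf_rem_Suc_gt_one[of j] by simp
qed (use pos in simp)

lemma cf_a_eq_floor: "real (cf_a \<alpha> k) = of_int \<lfloor>r k\<rfloor>"
  using cf_rem_pos[of k] unfolding cf_a_def by simp

lemma cf_a_Suc_ge_one: "1 \<le> cf_a \<alpha> (Suc k)"
  using cf_a_eq_floor[of "Suc k"] cf_rem_Suc_gt_one[of k] by linarith

lemma cf_q_pos: "0 < q k"
proof -
  have "0 < q k \<and> 0 < q (Suc k)"
  proof (induction k)
    case 0
    then show ?case using cf_a_Suc_ge_one[of 0] by simp
  qed simp
  then show ?thesis by simp
qed

lemma cf_q_le_Suc: "q k \<le> q (Suc k)"
proof (cases k)
  case 0
  then show ?thesis using cf_a_Suc_ge_one[of 0] by simp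
next
  case (Suc m)
  have "q (Suc m) \<le> cf_a \<alpha> (Suc (Suc m)) * q (Suc m)"
    using cf_a_Suc_ge_one[of "Suc m"] by simp
  then show ?thesis using Suc by (simp add: trans_le_add1)
qed

lemma mono_cf_q: "mono q"
  using cf_q_le_Suc by (simp add: mono_iff_le_Suc)

lemma cf_q_ge_index: "k \<le> q k"
proof -
  have "k \<le> q k \<and> Suc k \<le> q (Suc k)"
  proof (induction k)
    case 0
    then show ?case using cf_q_pos[of 1] by simp
  next
    case (Suc k)
    have "q (Suc k) \<le> cf_a \<alpha> (Suc (Suc k)) * q (Suc k)"
      using cf_a_Suc_ge_one[of "Suc k"] by simp
    then have "Suc (Suc k) \<le> q (Suc (Suc k))"
      using conjunct2[OF Suc] cf_q_pos[of k] by (simp only: cf_q.simps)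
    with Suc show ?case by simp
  qed
  then show ?thesis ..
qed

lemma err_Suc_Suc: "err (Suc (Suc k)) = real (cf_a \<alpha> (Suc (Suc k))) * err (Suc k) + err k"
  unfolding err_def by (simp add: algebra_simps)

lemma err_eq: "err k = - r (Suc (Suc k)) * err (Suc k)"
proof (induction k)
  case 0
  have r1: "r 1 = 1 / \<alpha>"
    using pos less_one by (simp add: frac_eq cf_rem.simps(2))
  have "1 - real (cf_a \<alpha> 1) * \<alpha> \<noteq> 0"
  proof
    assume "1 - real (cf_a \<alpha> 1) * \<alpha> = 0"
    then have "\<alpha> = 1 / real (cf_a \<alpha> 1)"
      using cf_a_Suc_ge_one[of 0] by (simp add: field_simps)
    then show False using irrational by (metis Rats_1 Rats_divide Rats_of_nat)
  qed
  moreover have "r 2 = \<alpha> / (1 - real (cf_a \<alpha> 1) * \<alpha>)"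
    using r1 pos cf_a_eq_floor[of 1]
    by (simp add: numeral_2_eq_2 cf_rem.simps(2) frac_def field_simps)
  ultimately show ?case by (simp add: err_def numeral_2_eq_2 field_simps)
next
  case (Suc k)
  have frac_r: "frac (r (Suc (Suc k))) = r (Suc (Suc k)) - real (cf_a \<alpha> (Suc (Suc k)))"
    using cf_a_eq_floor by (simp add: frac_def)
  have "err (Suc (Suc k)) = err (Suc k) * (real (cf_a \<alpha> (Suc (Suc k))) - r (Suc (Suc k)))"
    using err_Suc_Suc[of k] Suc by (simp add: algebra_simps)
  also have "\<dots> = - err (Suc k) * frac (r (Suc (Suc k)))"
    unfolding frac_r by (simp add: algebra_simps)
  finally have "err (Suc (Suc k)) = - err (Suc k) * frac (r (Suc (Suc k)))" .
  moreover have "r (Suc (Suc (Suc k))) = 1 / frac (r (Suc (Suc k)))"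
    by (simp add: cf_rem.simps(2))
  ultimately show ?case
    using frac_cf_rem_pos[of "Suc (Suc k)"] by (simp add: field_simps)
qed

lemma cf_det: "int (p (Suc k)) * int (q k) - int (p k) * int (q (Suc k)) = (-1) ^ k"
proof (induction k)
  case (Suc k)
  have "int (p (Suc (Suc k))) * int (q (Suc k)) - int (p (Suc k)) * int (q (Suc (Suc k)))
     = - (int (p (Suc k)) * int (q k) - int (p k) * int (q (Suc k)))"
    by (simp add: algebra_simps)
  then show ?case using Suc by simp
qed simp

lemma coprime_cf_p_cf_q: "coprime (p k) (q k)"
proof -
  have "coprime (int (p k)) (int (q k))"
  proof (rule coprimeI)
    fix c assume "c dvd int (p k)" "c dvd int (q k)"
    then have "c dvd (-1) ^ k" unfolding cf_det[symmetric] by simp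
    moreover have "is_unit ((-1::int) ^ k)" by simp
    ultimately show "is_unit c" by (rule dvd_unit_imp_unit)
  qed
  then show ?thesis by simp
qed

lemma abs_err_less: "\<bar>err k\<bar> < 1 / real (q (Suc k))"
proof -
  define R where "R = r (Suc (Suc k))"
  have R: "0 < R" using cf_rem_pos unfolding R_def by blast
  have "real (q (Suc k)) * err k - real (q k) * err (Suc k) = (-1) ^ k"
  proof -
    have "real (q (Suc k)) * err k - real (q k) * err (Suc k)
        = of_int (int (p (Suc k)) * int (q k) - int (p k) * int (q (Suc k)))"
      unfolding err_def by (simp add: algebra_simps)
    then show ?thesis by (simp add: cf_det)
  qed
  moreover have "err (Suc k) = - err k / R"
    using err_eq[of k] R unfolding R_def by (simp add: field_simps)
  ultimately have "err k * (real (q (Suc k)) + real (q k) / R) = (-1) ^ k"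
    using R by (simp add: field_simps)
  then have "\<bar>err k * (real (q (Suc k)) + real (q k) / R)\<bar> = 1"
    by simp
  then have "\<bar>err k\<bar> * (real (q (Suc k)) + real (q k) / R) = 1"
    using cf_q_pos[of "Suc k"] R by (simp add: abs_mult)
  moreover from this have "err k \<noteq> 0" by auto
  then have "0 < \<bar>err k\<bar> * (real (q k) / R)"
    using cf_q_pos[of k] R by (simp del: times_divide_eq_right)
  ultimately have "\<bar>err k\<bar> * real (q (Suc k)) < 1"
    by (simp add: distrib_left)
  then show ?thesis using cf_q_pos[of "Suc k"] by (simp add: less_divide_eq)
qed

lemma eventually_cf_q_between:
  assumes "\<forall>\<^sub>F n in sequentially. real (q (Suc n)) \<le> real (q n) * (ln (real (q n)))^2"
  shows "\<forall>\<^sub>F N in sequentially.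
           \<exists>k. real N \<le> real (q k) \<and> real (q k) \<le> real N * (ln (real N))^2"
proof -
  obtain K where K: "\<And>n. K \<le> n \<Longrightarrow> real (q (Suc n)) \<le> real (q n) * (ln (real (q n)))^2"
    using assms unfolding eventually_sequentially by blast
  have "\<exists>k. real N \<le> real (q k) \<and> real (q k) \<le> real N * (ln (real N))^2" if N: "q K < N" for N
  proof -
    define k where "k = (LEAST k. N \<le> q k)"
    have Nk: "N \<le> q k" unfolding k_def by (rule LeastI[of _ N]) (rule cf_q_ge_index)
    have "K < k"
      using N Nk monoD[OF mono_cf_q, of k K] by (cases "k \<le> K") auto
    then obtain j where j: "k = Suc j" "K \<le> j" by (cases k) auto
    have "\<not> N \<le> q j"
      unfolding k_def by (rule not_less_Least[of j "\<lambda>k. N \<le> q k"]) (simp add: j k_def[symmetric])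
    then have jN: "real (q j) \<le> real N" "1 \<le> real (q j)" using cf_q_pos[of j] by simp_all
    have "real (q k) \<le> real (q j) * (ln (real (q j)))^2" using K j by simp
    also have "\<dots> \<le> real N * (ln (real N))^2"
      using jN by (intro mult_mono power_mono) auto
    finally show ?thesis using Nk by auto
  qed
  then show ?thesis unfolding eventually_sequentially by (intro exI[of _ "Suc (q K)"]) auto
qed

end

section \<open>Orbits of a rotation at the scale of a convergent\<close>

lemma inverse_sqrt_le_sqrt_diff:
  fixes x :: real
  assumes "0 \<le> x"
  shows "1 / sqrt (x + 1) \<le> 2 * (sqrt (x + 1) - sqrt x)"
proof -
  define s t where "s = sqrt x" and "t = sqrt (x + 1)"
  have "(t - s) * (t + s) = 1"
    using assms by (simp add: s_def t_def algebra_simps)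
  moreover have "2 * (t - s) * t = (t - s) * (t + s) + (t - s)\<^sup>2"
    by (simp add: algebra_simps power2_eq_square)
  ultimately have "1 \<le> 2 * (t - s) * t"
    by (metis le_add_same_cancel1 zero_le_power2)
  moreover have "0 < t" using assms by (simp add: t_def)
  ultimately show ?thesis by (simp add: s_def t_def divide_le_eq)
qed

lemma inverse_sqrt_antimono: "0 < x \<Longrightarrow> x \<le> y \<Longrightarrow> 1 / sqrt y \<le> 1 / sqrt x"
  by (simp add: frac_le)

(* Bound for 1 / sqrt ||x|| when x lies within 2/q of j/q and ||x|| \<ge> \<delta>. *)
definition slot_weight :: "real \<Rightarrow> nat \<Rightarrow> nat \<Rightarrow> real" where
  "slot_weight \<delta> q j = 1 / sqrt (max \<delta> ((real j - 2) / real q))"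

lemma slot_weight_nonneg: "0 < \<delta> \<Longrightarrow> 0 \<le> slot_weight \<delta> q j"
  unfolding slot_weight_def by simp

lemma sum_slot_weight_le:
  assumes \<delta>: "0 < \<delta>" and q: "0 < q"
  shows "(\<Sum>j\<le>n + 2. slot_weight \<delta> q j) \<le> 3 / sqrt \<delta> + 2 * sqrt (real q) * sqrt (real n)"
proof (induction n)
  case 0
  have "slot_weight \<delta> q j = 1 / sqrt \<delta>" if "j \<le> 2" for j
  proof -
    have "(real j - 2) / real q \<le> 0" using that by (simp add: divide_nonpos_nonneg)
    then show ?thesis using \<delta> by (simp add: slot_weight_def max_def)
  qed
  then show ?case by simp
next
  case (Suc n)
  have "slot_weight \<delta> q (Suc n + 2) = 1 / sqrt (max \<delta> ((real n + 1) / real q))"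
    by (simp add: slot_weight_def add.commute)
  also have "\<dots> \<le> 1 / sqrt ((real n + 1) / real q)"
    using q by (intro inverse_sqrt_antimono) auto
  also have "\<dots> = sqrt (real q) * (1 / sqrt (real n + 1))"
    using q by (simp add: real_sqrt_divide)
  also have "\<dots> \<le> sqrt (real q) * (2 * (sqrt (real n + 1) - sqrt (real n)))"
    by (intro mult_left_mono inverse_sqrt_le_sqrt_diff) auto
  finally have "slot_weight \<delta> q (Suc n + 2)
      \<le> 2 * sqrt (real q) * sqrt (real (Suc n)) - 2 * sqrt (real q) * sqrt (real n)"
    by (simp add: algebra_simps)
  then show ?case using Suc by simp
qed

lemma sum_slot_weight_reflected_le:
  assumes \<delta>: "0 < \<delta>" and q: "0 < q"
  shows "(\<Sum>j<q. slot_weight \<delta> q j + slot_weight \<delta> q (q - j)) \<le> 6 / sqrt \<delta> + 4 * real q"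
proof -
  let ?S = "\<Sum>j\<le>q + 2. slot_weight \<delta> q j"
  have "2 * sqrt (real q) * sqrt (real q) = 2 * real q"
    by (simp add: mult.assoc)
  then have "?S \<le> 3 / sqrt \<delta> + 2 * real q"
    using sum_slot_weight_le[OF assms, of q] by linarith
  moreover have "(\<Sum>j<q. slot_weight \<delta> q j) \<le> ?S"
    by (rule sum_mono2) (auto simp: slot_weight_nonneg[OF \<delta>])
  moreover have "(\<Sum>j<q. slot_weight \<delta> q (q - j))
      = (\<Sum>j\<in>(\<lambda>j. q - j) ` {..<q}. slot_weight \<delta> q j)"
    by (subst sum.reindex) (auto simp: inj_on_def)
  moreover have "\<dots> \<le> ?S"
    by (rule sum_mono2) (auto simp: slot_weight_nonneg[OF \<delta>])
  ultimately show ?thesis by (simp add: sum.distrib)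
qed

lemma inverse_sqrt_le_slot_weights:
  assumes \<delta>: "0 < \<delta>" and "j \<le> q"
    and d: "max \<delta> ((min (real j) (real q - real j) - 2) / real q) \<le> d"
  shows "1 / sqrt d \<le> slot_weight \<delta> q j + slot_weight \<delta> q (q - j)"
proof (cases "real j \<le> real q - real j")
  case True
  then have "1 / sqrt d \<le> slot_weight \<delta> q j"
    unfolding slot_weight_def using d \<delta> by (intro inverse_sqrt_antimono) auto
  then show ?thesis using slot_weight_nonneg[OF \<delta>] by (smt (verit))
next
  case False
  then have "1 / sqrt d \<le> slot_weight \<delta> q (q - j)"
    unfolding slot_weight_def using d \<delta> \<open>j \<le> q\<close>
    by (intro inverse_sqrt_antimono) (auto simp: of_nat_diff)
  then show ?thesis using slot_weight_nonneg[OF \<delta>] by (smt (verit))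
qed

lemma bij_betw_affine_mod:
  assumes "coprime p q" and q: "0 < q"
  shows "bij_betw (\<lambda>i. nat ((A + int i * int p) mod int q)) {..<q} {..<q}"
proof -
  let ?h = "\<lambda>i. nat ((A + int i * int p) mod int q)"
  have "inj_on ?h {..<q}"
  proof (rule inj_onI)
    fix i j assume i: "i \<in> {..<q}" and j: "j \<in> {..<q}" and "?h i = ?h j"
    then have "(A + int i * int p) mod int q = (A + int j * int p) mod int q"
      using q by (simp add: nat_eq_iff)
    then have "int q dvd (int i - int j) * int p"
      by (simp add: mod_eq_dvd_iff algebra_simps)
    moreover have "coprime (int q) (int p)" using assms by (simp add: coprime_commute)
    ultimately have "int q dvd int i - int j" using coprime_dvd_mult_left_iff by blast
    moreover have "\<bar>int i - int j\<bar> < int q" using i j by auto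
    ultimately have "int i - int j = 0"
      by (metis abs_of_nat dvd_imp_le_int not_le)
    then show "i = j" by simp
  qed
  moreover have "?h ` {..<q} \<subseteq> {..<q}"
    using q by (auto simp: nat_less_iff)
  ultimately show ?thesis
    by (simp add: bij_betw_def endo_inj_surj)
qed

lemma real_nat_mod:
  assumes "0 < q"
  shows "real (nat (K mod int q)) = of_int K - real q * of_int (K div int q)"
proof -
  have "K mod int q = K - int q * (K div int q)"
    using mult_div_mod_eq[of "int q" K] by linarith
  then have "(of_int (K mod int q) :: real) = of_int K - real q * of_int (K div int q)"
    by simp
  moreover have "real (nat (K mod int q)) = of_int (K mod int q)" using assms by simp
  ultimately show ?thesis by simp
qed

locale coprime_approximant =
  fixes \<alpha> :: real and p q :: nat
  assumes q_pos: "0 < q" and coprime: "coprime p q"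
    and close: "\<bar>real q * \<alpha> - real p\<bar> * real q < 1"
begin

(* q (a + i \<alpha>) = (\<lfloor>q a\<rfloor> + i p) + frac (q a) + i (q \<alpha> - p), and slot a i is the first
   summand modulo q. *)
definition slot :: "real \<Rightarrow> nat \<Rightarrow> nat" where
  "slot a i = nat ((\<lfloor>real q * a\<rfloor> + int i * int p) mod int q)"

lemma slot_less: "slot a i < q"
  using q_pos by (simp add: slot_def nat_less_iff)

lemma bij_betw_slot: "bij_betw (slot a) {..<q} {..<q}"
  unfolding slot_def by (rule bij_betw_affine_mod[OF coprime q_pos])

lemma abs_drift_less: "i < q \<Longrightarrow> \<bar>real i * (real q * \<alpha> - real p)\<bar> < 1"
  using close mult_right_mono[of "real i" "real q" "\<bar>real q * \<alpha> - real p\<bar>"]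
  by (simp add: abs_mult mult.commute)

lemma dnint_orbit_slot:
  "dnint (a + real i * \<alpha> - t)
     = dnint ((real (slot a i) + frac (real q * a) + real i * (real q * \<alpha> - real p)) / real q - t)"
proof -
  define K where "K = \<lfloor>real q * a\<rfloor> + int i * int p"
  have "real (slot a i) = of_int K - real q * of_int (K div int q)"
    unfolding slot_def K_def by (rule real_nat_mod[OF q_pos])
  then have "a + real i * \<alpha> - t
      = (real (slot a i) + frac (real q * a) + real i * (real q * \<alpha> - real p)) / real q - t
        + of_int (K div int q)"
    using q_pos by (simp add: K_def frac_def field_simps)
  then show ?thesis by (metis dnint_add_int)
qed

lemma dnint_orbit_ge_slot:
  assumes "i < q"
  shows "(min (real (slot a i)) (real q - real (slot a i)) - 2) / real q \<le> dnint (a + real i * \<alpha>)"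
proof -
  define x where "x = real (slot a i) / real q"
  define \<theta> where "\<theta> = frac (real q * a) + real i * (real q * \<alpha> - real p)"
  have "\<bar>\<theta>\<bar> \<le> 2"
    using abs_drift_less[OF assms] frac_lt_1[of "real q * a"] frac_ge_0[of "real q * a"]
    unfolding \<theta>_def by linarith
  then have "\<bar>\<theta> / real q\<bar> \<le> 2 / real q"
    using q_pos by (simp add: divide_right_mono)
  moreover have "dnint (a + real i * \<alpha>) = dnint (x + \<theta> / real q)"
    using dnint_orbit_slot[of a i 0] unfolding x_def \<theta>_def by (simp add: add_divide_distrib add.assoc)
  moreover have "dnint x = min x (1 - x)"
    using slot_less[of a i] q_pos unfolding x_def by (intro dnint_unit_interval) auto
  moreover have "min x (1 - x) - 2 / real q = (min (real (slot a i)) (real q - real (slot a i)) - 2) / real q"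
    using q_pos unfolding x_def by (simp add: min_def field_simps)
  ultimately show ?thesis
    using dnint_triangle[of x "x + \<theta> / real q"] by simp
qed

lemma orbit_hits:
  obtains i where "i < q" and "dnint (a + real i * \<alpha> - t) \<le> 1 / real q"
proof -
  define c where "c = frac (real q * a)"
  define E where "E = real q * \<alpha> - real p"
  define F where "F = \<lfloor>real q * t - c\<rfloor>"
  define R where "R = (if 0 \<le> E then F else F + 1)"
  have "nat (R mod int q) \<in> slot a ` {..<q}"
    using bij_betw_slot[of a] q_pos unfolding bij_betw_def by (simp add: nat_less_iff)
  then obtain i where i: "i < q" and slot_i: "slot a i = nat (R mod int q)"
    by (metis imageE lessThan_iff)
  have F: "of_int F \<le> real q * t - c" "real q * t - c < of_int F + 1"
    unfolding F_def by linarith+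
  have iE: "\<bar>real i * E\<bar> < 1"
    using abs_drift_less[OF i] unfolding E_def .
  have "\<bar>of_int R + c + real i * E - real q * t\<bar> \<le> 1"
  proof (cases "0 \<le> E")
    case True
    then have "R = F" and "0 \<le> real i * E" by (simp_all add: R_def)
    then show ?thesis using F iE by linarith
  next
    case False
    then have "R = F + 1" and "real i * E \<le> 0" by (simp_all add: R_def mult_nonneg_nonpos)
    then show ?thesis using F iE by linarith
  qed
  moreover have "real (slot a i) = of_int R - real q * of_int (R div int q)"
    unfolding slot_i by (rule real_nat_mod[OF q_pos])
  ultimately have "dnint ((real (slot a i) + c + real i * E) / real q - t) \<le> 1 / real q"
    using dnint_le_dist_int[of "(real (slot a i) + c + real i * E) / real q - t" "- (R div int q)"] q_pos
    by (simp add: field_simps)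
  then show ?thesis
    using that i dnint_orbit_slot unfolding c_def E_def by metis
qed

end

lemma (in coprime_approximant) sum_inverse_sqrt_dnint_orbit_le:
  assumes f: "\<And>x. 0 < x \<Longrightarrow> x < 1 \<Longrightarrow> f x \<le> C / sqrt (dnint x)" and C: "0 \<le> C"
    and \<delta>: "0 < \<delta>" and avoid: "\<And>i. i < q \<Longrightarrow> \<delta> \<le> dnint (a + real i * \<alpha>)"
  shows "(\<Sum>i<q. f (frac (a + real i * \<alpha>))) \<le> C * (6 / sqrt \<delta> + 4 * real q)"
proof -
  let ?w = "\<lambda>j. slot_weight \<delta> q j + slot_weight \<delta> q (q - j)"
  have "f (frac (a + real i * \<alpha>)) \<le> C * ?w (slot a i)" if i: "i < q" for i
  proof -
    define d where "d = dnint (frac (a + real i * \<alpha>))"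
    have d: "max \<delta> ((min (real (slot a i)) (real q - real (slot a i)) - 2) / real q) \<le> d"
      using avoid[OF i] dnint_orbit_ge_slot[OF i, of a] dnint_frac_diff[of "a + real i * \<alpha>" 0]
      by (simp add: d_def)
    have "frac (a + real i * \<alpha>) \<noteq> 0"
    proof
      assume "frac (a + real i * \<alpha>) = 0"
      then have "d \<le> 0" using dnint_le_abs[of 0] unfolding d_def by (simp del: frac_eq_0_iff)
      then show False using d \<delta> by simp
    qed
    then have "0 < frac (a + real i * \<alpha>)"
      using frac_ge_0[of "a + real i * \<alpha>"] by linarith
    then have "f (frac (a + real i * \<alpha>)) \<le> C * (1 / sqrt d)"
      using f[OF _ frac_lt_1] by (simp add: d_def)
    also have "\<dots> \<le> C * ?w (slot a i)"
      using inverse_sqrt_le_slot_weights[OF \<delta> less_imp_le[OF slot_less] d] C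
      by (rule mult_left_mono)
    finally show ?thesis .
  qed
  then have "(\<Sum>i<q. f (frac (a + real i * \<alpha>))) \<le> C * (\<Sum>i<q. ?w (slot a i))"
    unfolding sum_distrib_left by (intro sum_mono) auto
  also have "(\<Sum>i<q. ?w (slot a i)) = (\<Sum>j<q. ?w j)"
    using sum.reindex_bij_betw[OF bij_betw_slot] .
  also have "C * \<dots> \<le> C * (6 / sqrt \<delta> + 4 * real q)"
    using sum_slot_weight_reflected_le[OF \<delta> q_pos] C by (rule mult_left_mono)
  finally show ?thesis .
qed

section \<open>Roof functions with inverse square root singularities\<close>

lemma le_inverse_sqrt_if_mult_powr_less:
  fixes y g B v :: real
  assumes y: "0 < y" "y \<le> 1" and g: "g \<le> 1/2" and B: "0 < B" and v: "v * y powr g < B"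
  shows "v < B / sqrt y"
proof (cases "v \<le> 0")
  case True
  moreover have "0 < B / sqrt y" using y B by simp
  ultimately show ?thesis by linarith
next
  case False
  have "sqrt y \<le> y powr g"
    using powr_mono'[OF g _ y(2)] y by (simp add: powr_half_sqrt)
  then have "v * sqrt y < B"
    using v False mult_left_mono[of "sqrt y" "y powr g" v] by linarith
  then show ?thesis using y by (simp add: less_divide_eq)
qed

lemma inverse_sqrt_dnint_bound:
  fixes f :: "real \<Rightarrow> real" and g M1 M2 :: real
  assumes cont: "continuous_on {0<..<1} f" and g: "g \<le> 1/2"
    and lim0: "((\<lambda>x. f x * x powr g) \<longlongrightarrow> M1) (at_right 0)"
    and lim1: "((\<lambda>x. f x * (1 - x) powr g) \<longlongrightarrow> M2) (at_left 1)"
  obtains C where "0 \<le> C" and "\<And>x. 0 < x \<Longrightarrow> x < 1 \<Longrightarrow> f x \<le> C / sqrt (dnint x)"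
proof -
  define B where "B = max 1 (max M1 M2 + 1)"
  have B: "1 \<le> B" "M1 < B" "M2 < B" unfolding B_def by auto
  obtain l where l: "0 < l" and near0: "\<And>x. 0 < x \<Longrightarrow> x < l \<Longrightarrow> f x * x powr g < B"
    using order_tendstoD(2)[OF lim0 B(2)] unfolding eventually_at_right_field by blast
  obtain u where u: "u < 1" and near1: "\<And>x. u < x \<Longrightarrow> x < 1 \<Longrightarrow> f x * (1 - x) powr g < B"
    using order_tendstoD(2)[OF lim1 B(3)] unfolding eventually_at_left_field by blast
  define l' u' where "l' = min l (1/2)" and "u' = max u (1/2)"
  have "continuous_on {l'..u'} f"
    using l u by (intro continuous_on_subset[OF cont]) (auto simp: l'_def u'_def)
  then obtain xm where xm: "\<And>x. x \<in> {l'..u'} \<Longrightarrow> f x \<le> f xm"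
    using continuous_attains_sup[of "{l'..u'}" f] l u by (force simp: l'_def u'_def)
  define C where "C = max B (f xm)"
  have C: "1 \<le> C" "B \<le> C" "f xm \<le> C" using B unfolding C_def by auto
  have "f x \<le> C / sqrt (dnint x)" if x: "0 < x" "x < 1" for x
  proof -
    have d: "dnint x = min x (1 - x)" using x by (intro dnint_unit_interval) auto
    have s: "0 < sqrt (dnint x)" "sqrt (dnint x) \<le> 1" using d x by auto
    have to_C: "B / sqrt y \<le> C / sqrt (dnint x)" if "0 < y" "dnint x \<le> y" for y
      using that s C B by (intro frac_le) auto
    have C_le: "C \<le> C / sqrt (dnint x)"
      using s C by (simp add: le_divide_eq mult_left_le)
    consider "x < l" | "u < x" | "x \<in> {l'..u'}"
      using x by (force simp: l'_def u'_def)
    then show ?thesis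
    proof cases
      case 1
      then have "f x < B / sqrt x"
        using le_inverse_sqrt_if_mult_powr_less[OF x(1) _ g _ near0] x B by simp
      then show ?thesis using to_C[of x] x d by fastforce
    next
      case 2
      then have "f x < B / sqrt (1 - x)"
        using le_inverse_sqrt_if_mult_powr_less[of "1 - x" g B, OF _ _ g _ near1] x B by simp
      then show ?thesis using to_C[of "1 - x"] x d by fastforce
    next
      case 3
      then show ?thesis using xm C C_le by fastforce
    qed
  qed
  moreover have "0 \<le> C" using C by simp
  ultimately show ?thesis using that by blast
qed

section \<open>The special flow\<close>

lemma frac_in_unit_interval: "frac x \<in> {0..<1}"
  by (simp add: frac_lt_1)

lemma birk_add_one: "birk f \<alpha> (m + 1) a = birk f \<alpha> m a + f (frac (a + of_int m * \<alpha>))"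
proof (cases "0 \<le> m")
  case True
  then have "nat (m + 1) = Suc (nat m)" by simp
  then show ?thesis using True unfolding birk_def by simp
next
  case False
  define k where "k = nat (- m)"
  have k: "1 \<le> k" "m = - int k" using False by (auto simp: k_def)
  show ?thesis
  proof (cases "m = -1")
    case True
    then show ?thesis unfolding birk_def by simp
  next
    case False
    have "{1..k} = insert k {1..k - 1}" using k by auto
    then have "(\<Sum>i\<in>{1..k}. f (frac (a - real i * \<alpha>)))
        = f (frac (a - real k * \<alpha>)) + (\<Sum>i\<in>{1..k - 1}. f (frac (a - real i * \<alpha>)))"
      using k by simp
    moreover have "nat (- (m + 1)) = k - 1" using k by simp
    ultimately show ?thesis using k False unfolding birk_def by simp
  qed
qed

lemma birk_strict_mono:
  assumes f_pos: "\<And>x. x \<in> {0..<1} \<Longrightarrow> 0 < f x" and "m < m'"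
  shows "birk f \<alpha> m a < birk f \<alpha> m' a"
  using assms(2)
proof (induction m' rule: int_gr_induct)
  case base
  show ?case
    using birk_add_one[of f \<alpha> m a] f_pos[OF frac_in_unit_interval, of "a + of_int m * \<alpha>"] by simp
next
  case (step i)
  show ?case
    using birk_add_one[of f \<alpha> i a] f_pos[OF frac_in_unit_interval, of "a + of_int i * \<alpha>"] step.IH
    by simp
qed

lemma flow_N_eqI:
  assumes f_pos: "\<And>x. x \<in> {0..<1} \<Longrightarrow> 0 < f x"
    and n: "birk f \<alpha> n a \<le> b + t" "b + t < birk f \<alpha> (n + 1) a"
  shows "flow_N f \<alpha> (a, b) t = n"
  unfolding flow_N_def fst_conv snd_conv
proof (rule the_equality)
  fix m assume m: "birk f \<alpha> m a \<le> b + t \<and> b + t < birk f \<alpha> (m + 1) a"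
  have mono: "birk f \<alpha> k a \<le> birk f \<alpha> k' a" if "k \<le> k'" for k k'
    using birk_strict_mono[where f = f and \<alpha> = \<alpha> and a = a, OF f_pos, where m = k and m' = k'] that
    by (cases "k = k'") auto
  show "m = n"
  proof (rule ccontr)
    assume "m \<noteq> n"
    then have "m + 1 \<le> n \<or> n + 1 \<le> m" by linarith
    then show False using mono[of "m + 1" n] mono[of "n + 1" m] m n by auto
  qed
qed (use n in simp)

lemma spflow_reaches_orbit_point:
  assumes f_pos: "\<And>x. x \<in> {0..<1} \<Longrightarrow> 0 < f x"
    and ab: "(a, b) \<in> flow_space f" and i: "i < Q"
  obtains T where "\<bar>T\<bar> \<le> (\<Sum>j<Q. f (frac (a + real j * \<alpha>)))"
    and "fst (spflow f \<alpha> T (a, b)) = frac (a + real i * \<alpha>)"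
proof -
  define S where "S = (\<Sum>j<Q. f (frac (a + real j * \<alpha>)))"
  define T where "T = birk f \<alpha> (int i) a - b"
  have birk_i: "birk f \<alpha> (int i) a = (\<Sum>j<i. f (frac (a + real j * \<alpha>)))"
    unfolding birk_def by simp
  have terms: "0 < f (frac (a + real j * \<alpha>))" for j
    using f_pos[OF frac_in_unit_interval] .
  have "flow_N f \<alpha> (a, b) T = int i"
    using birk_add_one[of f \<alpha> "int i" a] terms[of i] by (intro flow_N_eqI[OF f_pos]) (simp_all add: T_def)
  then have "fst (spflow f \<alpha> T (a, b)) = frac (a + real i * \<alpha>)"
    by (simp add: spflow_def Let_def)
  moreover have "0 \<le> birk f \<alpha> (int i) a" "birk f \<alpha> (int i) a \<le> S"
    unfolding birk_i S_def using i terms by (auto intro: sum_nonneg sum_mono2 less_imp_le)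
  moreover have "f a \<le> S"
  proof -
    have "f a = f (frac (a + real 0 * \<alpha>))" using ab by (simp add: flow_space_def frac_eq)
    also have "\<dots> \<le> S"
      unfolding S_def using i terms by (intro member_le_sum) (auto intro: less_imp_le)
    finally show ?thesis .
  qed
  moreover have "0 \<le> b" "b < f a" using ab by (auto simp: flow_space_def)
  ultimately show ?thesis using that[of T] by (simp add: S_def T_def abs_le_iff)
qed

lemma (in coprime_approximant) spflow_reaches_near:
  assumes f_pos: "\<And>x. x \<in> {0..<1} \<Longrightarrow> 0 < f x"
    and f: "\<And>x. 0 < x \<Longrightarrow> x < 1 \<Longrightarrow> f x \<le> C / sqrt (dnint x)" and C: "0 \<le> C"
    and \<delta>: "0 < \<delta>" and avoid: "\<And>i. i < q \<Longrightarrow> \<delta> \<le> dnint (a + real i * \<alpha>)"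
    and ab: "(a, b) \<in> flow_space f"
  obtains T where "\<bar>T\<bar> \<le> C * (6 / sqrt \<delta> + 4 * real q)"
    and "dH (spflow f \<alpha> T (a, b)) z \<le> 1 / real q"
proof -
  obtain i where i: "i < q" and hit: "dnint (a + real i * \<alpha> - fst z) \<le> 1 / real q"
    using orbit_hits .
  obtain T where T: "\<bar>T\<bar> \<le> (\<Sum>j<q. f (frac (a + real j * \<alpha>)))"
    and flow: "fst (spflow f \<alpha> T (a, b)) = frac (a + real i * \<alpha>)"
    using spflow_reaches_orbit_point[OF f_pos ab i] .
  have "dH (spflow f \<alpha> T (a, b)) z \<le> 1 / real q"
    unfolding dH_def flow dnint_frac_diff using hit .
  moreover have "\<bar>T\<bar> \<le> C * (6 / sqrt \<delta> + 4 * real q)"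
    using T sum_inverse_sqrt_dnint_orbit_le[OF f C \<delta> avoid] by linarith
  ultimately show ?thesis using that by blast
qed

lemma (in cf_irrational) coprime_approximant_convergent: "coprime_approximant \<alpha> (p k) (q k)"
proof
  show "0 < q k" by (rule cf_q_pos)
  show "coprime (p k) (q k)" by (rule coprime_cf_p_cf_q)
  have "1 / real (q (Suc k)) \<le> 1 / real (q k)"
    using cf_q_le_Suc[of k] cf_q_pos[of k] by (simp add: frac_le)
  then have "\<bar>err k\<bar> < 1 / real (q k)"
    using abs_err_less[of k] by linarith
  then show "\<bar>real (q k) * \<alpha> - real (p k)\<bar> * real (q k) < 1"
    using cf_q_pos[of k] by (simp add: err_def less_divide_eq)
qed

lemma (in coprime_approximant) U_set_spflow_reaches_near:
  assumes f_pos: "\<And>x. x \<in> {0..<1} \<Longrightarrow> 0 < f x"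
    and f: "\<And>x. 0 < x \<Longrightarrow> x < 1 \<Longrightarrow> f x \<le> C / sqrt (dnint x)" and C: "0 \<le> C"
    and N: "2 \<le> N" and q: "real N \<le> real q" "real q \<le> real N * (ln (real N))^2"
    and time: "C * (6 * sqrt (real N * ln (real N) ^ 3) + 4 * (real N * ln (real N) ^ 2))
      < real N * ln (real N) ^ 6"
    and zb: "zb \<in> U_set f \<alpha> N"
  shows "\<exists>T. \<bar>T\<bar> < real N * ln (real N) ^ 6 \<and> dH (spflow f \<alpha> T zb) z \<le> 1 / real N"
proof -
  obtain a b where zb_eq: "zb = (a, b)" by fastforce
  define \<delta> where "\<delta> = 1 / (real N * ln (real N) ^ 3)"
  have \<delta>: "0 < \<delta>" using N by (simp add: \<delta>_def)
  have ab: "(a, b) \<in> flow_space f" using zb by (simp add: U_set_def zb_eq)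
  have U: "\<delta> \<le> dnint (of_int n * \<alpha> + a)"
    if "real_of_int \<bar>n\<bar> \<le> real N * (ln (real N))^2" for n
    using zb that unfolding U_set_def zb_eq \<delta>_def by auto
  have avoid: "\<delta> \<le> dnint (a + real i * \<alpha>)" if "i < q" for i
    using U[of "int i"] that q(2) by (simp add: add.commute)
  obtain T where T: "\<bar>T\<bar> \<le> C * (6 / sqrt \<delta> + 4 * real q)"
    and near: "dH (spflow f \<alpha> T (a, b)) z \<le> 1 / real q"
    using spflow_reaches_near[OF f_pos f C \<delta> avoid ab] by blast
  have "1 / sqrt \<delta> = sqrt (real N * ln (real N) ^ 3)"
    by (simp add: \<delta>_def real_sqrt_divide)
  then have "C * (6 / sqrt \<delta> + 4 * real q)
      \<le> C * (6 * sqrt (real N * ln (real N) ^ 3) + 4 * (real N * ln (real N) ^ 2))"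
    using q(2) C by (intro mult_left_mono) auto
  moreover have "1 / real q \<le> 1 / real N" using q(1) N by (simp add: frac_le)
  ultimately show ?thesis using T near time unfolding zb_eq by (intro exI[of _ T] conjI) linarith+
qed

theorem lemma4p1:
  fixes f f' f'' :: "real \<Rightarrow> real" and \<eta> \<alpha> M1 M2 M3 M4 :: real
  assumes eta: "0 < \<eta>" "\<eta> < 1/2"
    and f'_deriv: "\<And>x. x \<in> {0<..<1} \<Longrightarrow> (f has_real_derivative f' x) (at x)"
    and f''_deriv: "\<And>x. x \<in> {0<..<1} \<Longrightarrow> (f' has_real_derivative f'' x) (at x)"
    and f''_cont: "continuous_on {0<..<1} f''"
    and f_pos: "\<And>x. x \<in> {0..<1} \<Longrightarrow> f x > 0"
    and f''_pos: "\<And>x. x \<in> {0<..<1} \<Longrightarrow> f'' x > 0"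
    and f_int: "(f has_integral 1) {0..1}"
    and lim1: "((\<lambda>x. f x * x powr (1/2 - \<eta>)) \<longlongrightarrow> M1) (at_right 0)"
    and lim2: "((\<lambda>x. f x * (1 - x) powr (1/2 - \<eta>)) \<longlongrightarrow> M2) (at_left 1)"
    and lim3: "((\<lambda>x. f' x * x powr (1/2 - \<eta> + 1)) \<longlongrightarrow> - M3) (at_right 0)"
    and lim4: "((\<lambda>x. f' x * (1 - x) powr (1/2 - \<eta> + 1)) \<longlongrightarrow> M4) (at_left 1)"
    and M: "M1 \<in> {0<..<1}" "M2 \<in> {0<..<1}" "M3 \<in> {0<..<1}" "M4 \<in> {0<..<1}"
    and alpha: "0 < \<alpha>" "\<alpha> < 1" "\<alpha> \<notin> \<rat>"
    and qgrowth: "\<forall>\<^sub>F n in sequentially.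
        real (cf_q \<alpha> (Suc n)) \<le> real (cf_q \<alpha> n) * (ln (real (cf_q \<alpha> n)))^2"
  shows "\<exists>N0::nat. \<forall>N\<ge>N0. \<forall>z\<in>U_set f \<alpha> N. \<forall>zb\<in>U_set f \<alpha> N.
           \<exists>T0::real. \<bar>T0\<bar> < real N * (ln (real N))^6 \<and>
             dH (spflow f \<alpha> T0 zb) z \<le> 1 / real N"
proof -
  interpret cf_irrational \<alpha> using alpha by unfold_locales
  have "continuous_on {0<..<1} f"
    by (rule continuous_at_imp_continuous_on) (use f'_deriv DERIV_isCont in blast)
  moreover have "1/2 - \<eta> \<le> 1/2" using eta by simp
  ultimately obtain C where C: "0 \<le> C"
    and roof: "\<And>x. 0 < x \<Longrightarrow> x < 1 \<Longrightarrow> f x \<le> C / sqrt (dnint x)"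
    using inverse_sqrt_dnint_bound[OF _ _ lim1 lim2] by blast
  have "\<forall>\<^sub>F N in sequentially. C * (6 * sqrt (real N * ln (real N) ^ 3) + 4 * (real N * ln (real N) ^ 2))
      < real N * ln (real N) ^ 6"
    by real_asymp
  moreover have "\<forall>\<^sub>F N in sequentially. 2 \<le> N" by (rule eventually_ge_at_top)
  moreover note eventually_cf_q_between[OF qgrowth]
  ultimately have "\<forall>\<^sub>F N in sequentially. \<forall>z\<in>U_set f \<alpha> N. \<forall>zb\<in>U_set f \<alpha> N.
      \<exists>T0. \<bar>T0\<bar> < real N * (ln (real N))^6 \<and> dH (spflow f \<alpha> T0 zb) z \<le> 1 / real N"
  proof eventually_elim
    case (elim N)
    then obtain k where k: "real N \<le> real (q k)" "real (q k) \<le> real N * (ln (real N))^2" by blast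
    interpret coprime_approximant \<alpha> "p k" "q k" by (rule coprime_approximant_convergent)
    show ?case using U_set_spflow_reaches_near[OF f_pos roof C elim(2) k elim(1)] by blast
  qed
  then show ?thesis unfolding eventually_sequentially by blast
qed

end
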